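(* Consider the data-selling model described in the context, with network $G$ on $n$ buyers, prior precision $z_0>0$ and marginal cost $\gamma>0$. Assume $$z_0<\frac{1}{2\sqrt{\gamma}}\cdot\frac{n+1}{2n+1}.$$ Let $m=\alpha(G)$ be the independence number of $G$. Then every optimal contract $C$ has the following form: (i) the target set $M(C)$ is a maximum independent set of $G$; (ii) the common precision is $z=\sqrt{m/\gamma}-z_0$, and the price is $p_i=\frac{1}{z_0}-\sqrt{\gamma/m}$ for every $i\in M(C)$.
   Context: Model. There is a finite set of buyers $N=\{1,\dots,n\}$ and an undirected network $G$ on $N$: for $i\neq j$, $g_{ij}=g_{ji}\in\{0,1\}$, with $g_{ij}=1$ iff $i$ and $j$ are linked. $N_i=\{j\neq i: g_{ij}=1\}$ is the set of neighbors of $i$ and $n_i=|N_i|$. A state $\theta\sim N(0,1/z_0)$ with $z_0>0$ is unknown to all. A contract $C$ of the seller consists of a target set $M(C)\subseteq N$, a common precision $z>0$, and prices $p_i\ge 0$ for $i\in M(C)$ (buyers outside $M(C)$ get nothing and pay nothing; quality discrimination is not allowed, so all targeted buyers get the same precision $z$). Each $i\in M(C)$ receives a signal $s_i=\theta+\varepsilon_i$, with $\varepsilon_i\sim N(0,1/z)$ independent of $\theta$ and of each other. Each buyer observes the signals of his neighbors in $M(C)$ (and his own if he is in $M(C)$) and then chooses $a_i\in\mathbb{R}$ to maximize $E[-(a_i-\theta)^2]$. Write $m_i=|N_i\cap M(C)|$. Under optimal (Bayesian) actions, buyer $i\in M(C)$ gets expected payoff $-\frac{1}{z_0+(m_i+1)z}-p_i$,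 and buyer $i\notin M(C)$ gets $-\frac{1}{z_0+m_i z}$. Buyer $i\in M(C)$ accepts iff $p_i\le p(m_i,z):=\frac{1}{z_0+m_iz}-\frac{1}{z_0+(m_i+1)z}$. A contract is feasible if every $i\in M(C)$ accepts. The seller's profit is $\pi(C)=\sum_{i\in M(C)}p_i-\gamma z$ with $\gamma>0$. An optimal contract is a feasible contract maximizing $\pi$. An independent set of $G$ is a set of nodes no two of which are linked. A maximum independent set is an independent set of largest cardinality, and this cardinality is the independence number $\alpha(G)$. *)

theory Defs
  imports Complex_Main
begin

text \<open>A contract is a triple (M, z, p): target set M, common precision z, price function p
  (only the values of p on M matter).\<close>

definition network :: "nat \<Rightarrow> (nat \<Rightarrow> nat \<Rightarrow> bool) \<Rightarrow> bool" where
  "network n g \<longleftrightarrow> (\<forall>i j. g i j \<longrightarrow> i \<in> {1..n} \<and> j \<in> {1..n}) \<and>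
                     (\<forall>i j. g i j \<longleftrightarrow> g j i) \<and> (\<forall>i. \<not> g i i)"

definition nbrs :: "nat \<Rightarrow> (nat \<Rightarrow> nat \<Rightarrow> bool) \<Rightarrow> nat \<Rightarrow> nat set" where
  "nbrs n g i = {j \<in> {1..n}. j \<noteq> i \<and> g i j}"

definition price_bound :: "real \<Rightarrow> nat \<Rightarrow> real \<Rightarrow> real" where
  "price_bound z0 k z = 1 / (z0 + real k * z) - 1 / (z0 + (real k + 1) * z)"

type_synonym contract = "nat set \<times> real \<times> (nat \<Rightarrow> real)"

definition is_contract :: "nat \<Rightarrow> contract \<Rightarrow> bool" where
  "is_contract n C = (case C of (M, z, p) \<Rightarrow> M \<subseteq> {1..n} \<and> z > 0 \<and> (\<forall>i\<in>M. p i \<ge> 0))"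

definition feasible :: "nat \<Rightarrow> (nat \<Rightarrow> nat \<Rightarrow> bool) \<Rightarrow> real \<Rightarrow> contract \<Rightarrow> bool" where
  "feasible n g z0 C = (is_contract n C \<and>
     (case C of (M, z, p) \<Rightarrow> \<forall>i\<in>M. p i \<le> price_bound z0 (card (nbrs n g i \<inter> M)) z))"

definition profit :: "real \<Rightarrow> contract \<Rightarrow> real" where
  "profit \<gamma> C = (case C of (M, z, p) \<Rightarrow> (\<Sum>i\<in>M. p i) - \<gamma> * z)"

definition optimal :: "nat \<Rightarrow> (nat \<Rightarrow> nat \<Rightarrow> bool) \<Rightarrow> real \<Rightarrow> real \<Rightarrow> contract \<Rightarrow> bool" where
  "optimal n g z0 \<gamma> C = (feasible n g z0 C \<and>
     (\<forall>C'. feasible n g z0 C' \<longrightarrow> profit \<gamma> C' \<le> profit \<gamma> C))"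

definition independent_set :: "nat \<Rightarrow> (nat \<Rightarrow> nat \<Rightarrow> bool) \<Rightarrow> nat set \<Rightarrow> bool" where
  "independent_set n g S \<longleftrightarrow> S \<subseteq> {1..n} \<and> (\<forall>i\<in>S. \<forall>j\<in>S. \<not> g i j)"

definition independence_number :: "nat \<Rightarrow> (nat \<Rightarrow> nat \<Rightarrow> bool) \<Rightarrow> nat" where
  "independence_number n g = Max (card ` {S. independent_set n g S})"

definition max_independent_set :: "nat \<Rightarrow> (nat \<Rightarrow> nat \<Rightarrow> bool) \<Rightarrow> nat set \<Rightarrow> bool" where
  "max_independent_set n g S \<longleftrightarrow> independent_set n g S \<and> card S = independence_number n g"

end

(*
  A buyer with k targeted neighbours pays at most price_bound z0 k z, which decreases in k.
  Deleting a vertex of minimum degree d in M together with its neighbours loses at most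
  (d + 1) * price_bound z0 d z of revenue and puts the vertex into an independent set;
  iterating, the revenue of M is at most H times the size of an independent subset of M
  whenever H bounds every (k + 1) * price_bound z0 k z, strictly so if M is not independent.
  H = max (price_bound z0 0 z) (2 / (5 * z0)) is such a bound, and the hypothesis on z0 makes
  a * H - gamma * z at most the profit max_profit of selling to a maximum independent set
  (of size a) at precision sqrt (a / gamma) - z0. Hence optimal targets are independent,
  their profit is at most a * price_bound z0 0 z - gamma * z, and by AM-GM this reaches
  max_profit only at that precision.
*)
theory Submission
  imports Defs
begin

lemma price_bound_eq:
  assumes "z0 > 0" "z \<ge> 0"
  shows "price_bound z0 k z = z / ((z0 + real k * z) * (z0 + (real k + 1) * z))"
proof -
  have "z0 + real k * z > 0" "z0 + (real k + 1) * z > 0"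
    using assms by (simp_all add: add_pos_nonneg)
  then show ?thesis
    unfolding price_bound_def by (simp add: field_simps)
qed

lemma price_bound_zero: "price_bound z0 0 z = 1 / z0 - 1 / (z0 + z)"
  by (simp add: price_bound_def)

lemma price_bound_pos:
  assumes "z0 > 0" "z > 0"
  shows "price_bound z0 k z > 0"
  using assms by (simp add: price_bound_eq add_pos_nonneg)

lemma price_bound_antimono:
  assumes "z0 > 0" "z \<ge> 0"
  shows "antimono (\<lambda>k. price_bound z0 k z)"
proof (rule antimonoI)
  fix a b :: nat
  assume "a \<le> b"
  then have "(z0 + real a * z) * (z0 + (real a + 1) * z)
      \<le> (z0 + real b * z) * (z0 + (real b + 1) * z)"
    using assms by (intro mult_mono add_left_mono mult_right_mono) (simp_all add: add_nonneg_nonneg)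
  moreover have "0 < (z0 + real a * z) * (z0 + (real a + 1) * z)"
    using assms by (simp add: add_pos_nonneg)
  ultimately show "price_bound z0 b z \<le> price_bound z0 a z"
    using assms by (simp add: price_bound_eq frac_le)
qed

lemma scaled_price_bound_less_price_bound_zero:
  assumes "z0 > 0" "z0 < 2 * z" "k \<ge> 1"
  shows "real (k + 1) * price_bound z0 k z < price_bound z0 0 z"
proof -
  define K where "K = real k"
  define D where "D = (z0 + K * z) * (z0 + (K + 1) * z)"
  define E where "E = z0 * (z0 + z)"
  have "K \<ge> 1" "z > 0" using assms by (simp_all add: K_def)
  then have "D > 0" "E > 0" using assms(1) by (simp_all add: D_def E_def add_pos_nonneg)
  \<comment> \<open>this product is D - (K + 1) * E\<close>
  have "0 < K * ((2 * z - z0) * (z + z0) + (K - 1) * z * z)"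
    using \<open>K \<ge> 1\<close> \<open>z > 0\<close> assms(1,2) by (intro mult_pos_pos add_pos_nonneg) simp_all
  then have "(K + 1) * E < D"
    by (simp add: D_def E_def algebra_simps)
  then have "(K + 1) * E * z < D * z"
    using \<open>z > 0\<close> by simp
  then have "(K + 1) * (z / D) < z / E"
    using \<open>D > 0\<close> \<open>E > 0\<close> by (simp add: field_simps)
  then show ?thesis
    using assms(1) \<open>z > 0\<close> unfolding price_bound_eq[OF assms(1) less_imp_le[OF \<open>z > 0\<close>]]
    by (simp add: D_def E_def K_def add.commute)
qed

lemma scaled_price_bound_less_small_precision:
  assumes "z0 > 0" "z > 0" "2 * z \<le> z0"
  shows "real (k + 1) * price_bound z0 k z < 2 / (5 * z0)"
proof -
  define u where "u = (real k + 1) * z"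
  define D where "D = (z0 + real k * z) * (z0 + u)"
  have "u > 0" using assms by (simp add: u_def add_pos_nonneg)
  have "(z0 + 2 * u) * (z0 + u) \<le> (2 * (z0 + real k * z)) * (z0 + u)"
    using assms \<open>u > 0\<close> by (intro mult_right_mono) (simp_all add: u_def algebra_simps)
  moreover have "5 * z0 * u < (z0 + 2 * u) * (z0 + u)"
  proof -
    have "0 < (z0 - u)\<^sup>2 + u\<^sup>2" using \<open>u > 0\<close> by (simp add: add_nonneg_pos)
    then show ?thesis by (simp add: power2_eq_square algebra_simps)
  qed
  moreover have "(2 * (z0 + real k * z)) * (z0 + u) = 2 * D" by (simp add: D_def)
  ultimately have "5 * z0 * u < 2 * D" by linarith
  moreover have "D > 0" using assms \<open>u > 0\<close> by (simp add: D_def add_pos_nonneg)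
  ultimately have "u / D < 2 / (5 * z0)"
    using assms(1) by (simp add: field_simps)
  then show ?thesis
    unfolding price_bound_eq[OF assms(1) less_imp_le[OF assms(2)]]
    by (simp add: D_def u_def add.commute)
qed

lemma scaled_price_bound_less_max:
  assumes "z0 > 0" "z > 0" "k \<ge> 1"
  shows "real (k + 1) * price_bound z0 k z < max (price_bound z0 0 z) (2 / (5 * z0))"
proof (cases "z0 < 2 * z")
  case True
  then show ?thesis
    using scaled_price_bound_less_price_bound_zero[OF assms(1) True assms(3)] by simp
next
  case False
  then show ?thesis
    using scaled_price_bound_less_small_precision[OF assms(1,2), of k] by simp
qed

definition max_profit :: "real \<Rightarrow> real \<Rightarrow> real \<Rightarrow> real" where
  "max_profit z0 \<gamma> a = a / z0 - 2 * sqrt (a * \<gamma>) + \<gamma> * z0"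

lemma max_profit_gap:
  assumes "z0 > 0" "\<gamma> > 0" "a \<ge> 0" "z0 + x > 0"
  shows "a * price_bound z0 0 x - \<gamma> * x
    = max_profit z0 \<gamma> a - \<gamma> * (z0 + x - sqrt (a / \<gamma>))\<^sup>2 / (z0 + x)"
proof -
  define t where "t = sqrt (a / \<gamma>)"
  have a_eq: "a = \<gamma> * t\<^sup>2" using assms by (simp add: t_def)
  have "sqrt (a * \<gamma>) = \<gamma> * t"
    using assms by (simp add: t_def real_sqrt_mult real_sqrt_divide field_simps)
  then have "max_profit z0 \<gamma> a - (a * price_bound z0 0 x - \<gamma> * x)
      = a / (z0 + x) + \<gamma> * (z0 + x) - 2 * \<gamma> * t"
    unfolding max_profit_def price_bound_zero by (simp add: algebra_simps)
  also have "\<dots> = \<gamma> * (z0 + x - t)\<^sup>2 / (z0 + x)"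
    using assms(4) unfolding a_eq by (simp add: field_simps power2_eq_square)
  finally show ?thesis unfolding t_def by simp
qed

lemma profit_curve_le_max_profit:
  assumes "z0 > 0" "\<gamma> > 0" "a \<ge> 0" "z0 + x > 0"
  shows "a * price_bound z0 0 x - \<gamma> * x \<le> max_profit z0 \<gamma> a"
  using max_profit_gap[OF assms] assms by simp

lemma profit_curve_eq_max_profit_iff:
  assumes "z0 > 0" "\<gamma> > 0" "a \<ge> 0" "z0 + x > 0"
  shows "a * price_bound z0 0 x - \<gamma> * x = max_profit z0 \<gamma> a \<longleftrightarrow> x = sqrt (a / \<gamma>) - z0"
  using max_profit_gap[OF assms] assms by auto

lemma max_profit_lower_bound:
  assumes "z0 > 0" "\<gamma> > 0" "10 * z0 * sqrt \<gamma> \<le> 3"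
  shows "2 * real a / (5 * z0) \<le> max_profit z0 \<gamma> (real a)"
proof -
  have "sqrt (real a) \<le> real a"
    by (rule real_le_lsqrt) (simp_all add: power2_eq_square le_square flip: of_nat_mult)
  have "10 * z0 * sqrt (real a * \<gamma>) \<le> 3 * sqrt (real a)"
    using mult_right_mono[OF assms(3), of "sqrt (real a)"]
    by (simp add: real_sqrt_mult algebra_simps)
  also have "\<dots> \<le> 3 * real a" using \<open>sqrt (real a) \<le> real a\<close> by simp
  finally have "2 * sqrt (real a * \<gamma>) \<le> 3 * real a / (5 * z0)"
    using assms(1) by (simp add: field_simps)
  moreover have "0 \<le> \<gamma> * z0" using assms by simp
  ultimately show ?thesis
    unfolding max_profit_def by (simp add: field_simps)
qed

abbreviation deg_in :: "nat \<Rightarrow> (nat \<Rightarrow> nat \<Rightarrow> bool) \<Rightarrow> nat set \<Rightarrow> nat \<Rightarrow> nat" where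
  "deg_in n g M i \<equiv> card (nbrs n g i \<inter> M)"

lemma finite_independent_sets: "finite {S. independent_set n g S}"
  by (rule finite_subset[of _ "Pow {1..n}"]) (auto simp: independent_set_def)

lemma card_le_independence_number:
  "independent_set n g S \<Longrightarrow> card S \<le> independence_number n g"
  unfolding independence_number_def using finite_independent_sets by (intro Max_ge) auto

lemma ex_max_independent_set: "\<exists>S. max_independent_set n g S"
proof -
  have "{S. independent_set n g S} \<noteq> {}"
    by (auto simp: independent_set_def)
  then have "independence_number n g \<in> card ` {S. independent_set n g S}"
    unfolding independence_number_def using finite_independent_sets by (intro Max_in) auto
  then show ?thesis
    unfolding max_independent_set_def by auto
qed

lemma independent_set_insert:
  assumes "network n g" "independent_set n g S" "v \<in> {1..n}" "v \<notin> S"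
    and "S \<inter> nbrs n g v = {}"
  shows "independent_set n g (insert v S)"
  using assms unfolding independent_set_def network_def nbrs_def by blast

lemma deg_in_isolated:
  "independent_set n g M \<Longrightarrow> i \<in> M \<Longrightarrow> deg_in n g M i = 0"
  unfolding independent_set_def nbrs_def by auto

lemma weight_sum_le_closed_nbhd_split:
  fixes w :: "nat \<Rightarrow> real"
  assumes "antimono w" "finite M" "v \<in> M"
    and min_deg: "\<And>u. u \<in> nbrs n g v \<inter> M \<Longrightarrow> deg_in n g M v \<le> deg_in n g M u"
  defines "R \<equiv> M - insert v (nbrs n g v)"
  shows "(\<Sum>i\<in>M. w (deg_in n g M i))
    \<le> real (deg_in n g M v + 1) * w (deg_in n g M v) + (\<Sum>i\<in>R. w (deg_in n g R i))"
proof -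
  define C where "C = insert v (nbrs n g v \<inter> M)"
  have "C \<subseteq> M" "R = M - C" using assms(3) by (auto simp: C_def R_def)
  have "card C = deg_in n g M v + 1"
    using assms(2) by (simp add: C_def nbrs_def)
  have "(\<Sum>i\<in>C. w (deg_in n g M i)) \<le> real (card C) * w (deg_in n g M v)"
    using min_deg \<open>antimono w\<close> by (intro sum_bounded_above) (auto simp: C_def antimonoD)
  then have "(\<Sum>i\<in>C. w (deg_in n g M i)) \<le> real (deg_in n g M v + 1) * w (deg_in n g M v)"
    by (simp only: \<open>card C = deg_in n g M v + 1\<close>)
  moreover have "(\<Sum>i\<in>R. w (deg_in n g M i)) \<le> (\<Sum>i\<in>R. w (deg_in n g R i))"
    using assms(2) \<open>antimono w\<close>
    by (intro sum_mono antimonoD[of w] card_mono) (auto simp: R_def)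
  moreover have "(\<Sum>i\<in>M. w (deg_in n g M i))
      = (\<Sum>i\<in>R. w (deg_in n g M i)) + (\<Sum>i\<in>C. w (deg_in n g M i))"
    using sum.subset_diff[OF \<open>C \<subseteq> M\<close> assms(2)] \<open>R = M - C\<close> by simp
  ultimately show ?thesis by linarith
qed

text \<open>H appears on both sides so that callers can compare the cost (d + 1) * w d of the
  step with H either weakly or strictly.\<close>

lemma ex_independent_subset_closed_nbhd_step:
  fixes w :: "nat \<Rightarrow> real"
  assumes "network n g" "antimono w" "M \<subseteq> {1..n}" "v \<in> M"
    and "\<And>u. u \<in> nbrs n g v \<inter> M \<Longrightarrow> deg_in n g M v \<le> deg_in n g M u"
  defines "R \<equiv> M - insert v (nbrs n g v)"
  assumes "S' \<subseteq> R" "independent_set n g S'"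
    and "(\<Sum>i\<in>R. w (deg_in n g R i)) \<le> H * real (card S')"
  shows "\<exists>S\<subseteq>M. independent_set n g S \<and> (\<Sum>i\<in>M. w (deg_in n g M i)) + H
    \<le> real (deg_in n g M v + 1) * w (deg_in n g M v) + H * real (card S)"
proof (intro exI conjI)
  have "finite M" using assms(3) finite_subset by blast
  moreover have "S' \<subseteq> M" "v \<notin> S'" using \<open>S' \<subseteq> R\<close> by (auto simp: R_def)
  ultimately have "card (insert v S') = card S' + 1"
    by (simp add: finite_subset)
  moreover have "(\<Sum>i\<in>M. w (deg_in n g M i))
      \<le> real (deg_in n g M v + 1) * w (deg_in n g M v) + (\<Sum>i\<in>R. w (deg_in n g R i))"
    unfolding R_def using assms(2) \<open>finite M\<close> assms(4,5) by (rule weight_sum_le_closed_nbhd_split)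
  ultimately show "(\<Sum>i\<in>M. w (deg_in n g M i)) + H
      \<le> real (deg_in n g M v + 1) * w (deg_in n g M v) + H * real (card (insert v S'))"
    using assms(9) by (simp add: algebra_simps)
  show "insert v S' \<subseteq> M" using assms(4,7) by (auto simp: R_def)
  show "independent_set n g (insert v S')"
    using assms(1,3,4,7,8) by (intro independent_set_insert) (auto simp: R_def)
qed

lemma ex_independent_subset_weight_sum_le:
  fixes w :: "nat \<Rightarrow> real"
  assumes "network n g" "antimono w" "\<And>k. real (k + 1) * w k \<le> H" "M \<subseteq> {1..n}"
  shows "\<exists>S\<subseteq>M. independent_set n g S \<and> (\<Sum>i\<in>M. w (deg_in n g M i)) \<le> H * real (card S)"
proof -
  have "finite M" using assms(4) finite_subset by blast
  then show ?thesis using assms(4)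
  proof (induction M rule: finite_psubset_induct)
    case (psubset M)
    show ?case
    proof (cases "M = {}")
      case True
      then show ?thesis by (auto simp: independent_set_def)
    next
      case False
      define v where "v = arg_min_on (deg_in n g M) M"
      have "v \<in> M"
        unfolding v_def by (rule arg_min_if_finite(1)[OF psubset.hyps(1) False])
      have v_min: "deg_in n g M v \<le> deg_in n g M u" if "u \<in> nbrs n g v \<inter> M" for u
        using arg_min_if_finite(2)[OF psubset.hyps(1) False, where f = "deg_in n g M"] that
        unfolding v_def by (simp add: not_less)
      define R where "R = M - insert v (nbrs n g v)"
      have "R \<subset> M" "R \<subseteq> {1..n}" using \<open>v \<in> M\<close> psubset.prems by (auto simp: R_def)
      then obtain S' where S': "S' \<subseteq> R" "independent_set n g S'"
        "(\<Sum>i\<in>R. w (deg_in n g R i)) \<le> H * real (card S')"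
        using psubset.IH by meson
      obtain S where "S \<subseteq> M" "independent_set n g S"
        "(\<Sum>i\<in>M. w (deg_in n g M i)) + H
          \<le> real (deg_in n g M v + 1) * w (deg_in n g M v) + H * real (card S)"
        using ex_independent_subset_closed_nbhd_step[OF assms(1,2) psubset.prems \<open>v \<in> M\<close> v_min
            S'[unfolded R_def]] by blast
      moreover have "real (deg_in n g M v + 1) * w (deg_in n g M v) \<le> H" by (rule assms(3))
      ultimately show ?thesis by (intro exI[of _ S]) auto
    qed
  qed
qed

lemma ex_independent_subset_weight_sum_less:
  fixes w :: "nat \<Rightarrow> real"
  assumes "network n g" "antimono w" "\<And>k. real (k + 1) * w k \<le> H"
    and "\<And>k. k \<ge> 1 \<Longrightarrow> real (k + 1) * w k < H"
    and "M \<subseteq> {1..n}" "\<not> independent_set n g M"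
  shows "\<exists>S\<subseteq>M. independent_set n g S \<and> (\<Sum>i\<in>M. w (deg_in n g M i)) < H * real (card S)"
proof -
  have "finite M" using assms(5) finite_subset by blast
  \<comment> \<open>v minimises the degree over the non-isolated vertices only; its neighbours are
    non-isolated too, so the greedy step applies, and it is strict as v has positive degree.\<close>
  define X where "X = {i \<in> M. deg_in n g M i \<noteq> 0}"
  have "finite X" using \<open>finite M\<close> by (simp add: X_def)
  have "X \<noteq> {}"
  proof -
    obtain i j where "i \<in> M" "j \<in> M" "g i j"
      using assms(5,6) unfolding independent_set_def by blast
    then have "j \<in> nbrs n g i \<inter> M"
      using assms(1,5) unfolding network_def nbrs_def by auto
    then have "i \<in> X" using \<open>i \<in> M\<close> \<open>finite M\<close> by (auto simp: X_def)
    then show ?thesis by blast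
  qed
  define v where "v = arg_min_on (deg_in n g M) X"
  have "v \<in> X"
    unfolding v_def by (rule arg_min_if_finite(1)[OF \<open>finite X\<close> \<open>X \<noteq> {}\<close>])
  have v_min: "deg_in n g M v \<le> deg_in n g M u" if "u \<in> X" for u
    using arg_min_if_finite(2)[OF \<open>finite X\<close> \<open>X \<noteq> {}\<close>, where f = "deg_in n g M"] that
    unfolding v_def by (simp add: not_less)
  have "v \<in> M" "deg_in n g M v \<ge> 1" using \<open>v \<in> X\<close> by (auto simp: X_def)
  have nbr_min: "deg_in n g M v \<le> deg_in n g M u" if "u \<in> nbrs n g v \<inter> M" for u
  proof (rule v_min)
    have "v \<in> nbrs n g u \<inter> M"
      using that \<open>v \<in> M\<close> assms(1,5) unfolding network_def nbrs_def by auto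
    then show "u \<in> X" using that \<open>finite M\<close> by (auto simp: X_def)
  qed
  have "M - insert v (nbrs n g v) \<subseteq> {1..n}" using assms(5) by auto
  then obtain S' where S': "S' \<subseteq> M - insert v (nbrs n g v)" "independent_set n g S'"
    "(\<Sum>i\<in>M - insert v (nbrs n g v). w (deg_in n g (M - insert v (nbrs n g v)) i))
      \<le> H * real (card S')"
    using ex_independent_subset_weight_sum_le[OF assms(1-3)] by meson
  obtain S where "S \<subseteq> M" "independent_set n g S"
    "(\<Sum>i\<in>M. w (deg_in n g M i)) + H
      \<le> real (deg_in n g M v + 1) * w (deg_in n g M v) + H * real (card S)"
    using ex_independent_subset_closed_nbhd_step[OF assms(1,2,5) \<open>v \<in> M\<close> nbr_min S'] by blast
  moreover note assms(4)[OF \<open>deg_in n g M v \<ge> 1\<close>]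
  ultimately show ?thesis by (intro exI[of _ S]) auto
qed

lemma independence_number_ge_one:
  assumes "network n g" "i \<in> {1..n}"
  shows "1 \<le> independence_number n g"
proof -
  have "independent_set n g {i}"
    using assms unfolding independent_set_def network_def by auto
  then show ?thesis using card_le_independence_number by fastforce
qed

lemma two_le_if_not_independent:
  assumes "network n g" "M \<subseteq> {1..n}" "\<not> independent_set n g M"
  shows "n \<ge> 2"
proof -
  obtain i j where "i \<in> M" "j \<in> M" "g i j"
    using assms(2,3) unfolding independent_set_def by blast
  then have "i \<noteq> j" "i \<in> {1..n}" "j \<in> {1..n}"
    using assms(1,2) unfolding network_def by auto
  then show ?thesis by auto
qed

lemma prior_precision_bounds:
  assumes "\<gamma> > 0" "z0 < 1 / (2 * sqrt \<gamma>) * ((real n + 1) / (2 * real n + 1))"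
  shows "a \<ge> 1 \<Longrightarrow> z0 < sqrt (a / \<gamma>)" and "n \<ge> 2 \<Longrightarrow> 10 * z0 * sqrt \<gamma> \<le> 3"
proof -
  define q where "q = (real n + 1) / (2 * real n + 1)"
  have "2 * sqrt \<gamma> * z0 < 2 * sqrt \<gamma> * (1 / (2 * sqrt \<gamma>) * q)"
    using assms by (intro mult_strict_left_mono) (simp_all add: q_def)
  also have "\<dots> = q" using assms(1) by simp
  finally have "2 * z0 * sqrt \<gamma> < q" by (simp add: ac_simps)
  moreover have "q \<le> 1" by (simp add: q_def)
  moreover have "q \<le> 3 / 5" if "n \<ge> 2"
    using that by (simp add: q_def field_simps)
  ultimately have "z0 * sqrt \<gamma> < 1" and "n \<ge> 2 \<Longrightarrow> 10 * z0 * sqrt \<gamma> \<le> 3"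
    by linarith+
  then show "n \<ge> 2 \<Longrightarrow> 10 * z0 * sqrt \<gamma> \<le> 3" by blast
  show "z0 < sqrt (a / \<gamma>)" if "a \<ge> 1"
  proof -
    have "z0 * sqrt \<gamma> < sqrt a"
      using \<open>z0 * sqrt \<gamma> < 1\<close> real_sqrt_ge_one[OF that] by linarith
    then show ?thesis
      using assms(1) by (simp add: real_sqrt_divide field_simps)
  qed
qed

lemma feasible_profit_le:
  assumes "feasible n g z0 (M, z, p)"
  shows "profit \<gamma> (M, z, p) \<le> (\<Sum>i\<in>M. price_bound z0 (deg_in n g M i) z) - \<gamma> * z"
  using assms unfolding feasible_def profit_def by (simp add: sum_mono)

lemma independent_set_contract_feasible:
  assumes "independent_set n g S" "z0 > 0" "x > 0"
  shows "feasible n g z0 (S, x, \<lambda>_. price_bound z0 0 x)"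
  using assms deg_in_isolated[OF assms(1)] less_imp_le[OF price_bound_pos[OF assms(2,3)]]
  unfolding feasible_def is_contract_def independent_set_def by auto

lemma optimal_target_nonempty:
  assumes "\<gamma> > 0" "optimal n g z0 \<gamma> (M, z, p)"
  shows "M \<noteq> {}"
proof
  assume "M = {}"
  have "z > 0" using assms(2) by (simp add: optimal_def feasible_def is_contract_def)
  then have "feasible n g z0 ({}, z / 2, p)"
    by (simp add: feasible_def is_contract_def)
  then have "profit \<gamma> ({}, z / 2, p) \<le> profit \<gamma> (M, z, p)"
    using assms(2) by (simp add: optimal_def)
  then show False
    using \<open>M = {}\<close> \<open>z > 0\<close> assms(1) by (simp add: profit_def)
qed

lemma max_profit_le_optimal_profit:
  assumes "z0 > 0" "\<gamma> > 0" "z0 < sqrt (real (independence_number n g) / \<gamma>)"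
    and "optimal n g z0 \<gamma> C"
  shows "max_profit z0 \<gamma> (real (independence_number n g)) \<le> profit \<gamma> C"
proof -
  define a where "a = real (independence_number n g)"
  define x where "x = sqrt (a / \<gamma>) - z0"
  obtain S where "max_independent_set n g S" using ex_max_independent_set by blast
  then have "independent_set n g S" "real (card S) = a"
    by (simp_all add: max_independent_set_def a_def)
  have "x > 0" using assms(3) by (simp add: x_def a_def)
  then have "feasible n g z0 (S, x, \<lambda>_. price_bound z0 0 x)"
    by (rule independent_set_contract_feasible[OF \<open>independent_set n g S\<close> assms(1)])
  then have "profit \<gamma> (S, x, \<lambda>_. price_bound z0 0 x) \<le> profit \<gamma> C"
    using assms(4) by (simp add: optimal_def)
  moreover have "profit \<gamma> (S, x, \<lambda>_. price_bound z0 0 x) = max_profit z0 \<gamma> a"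
  proof -
    have "z0 + x > 0" using assms(1) \<open>x > 0\<close> by simp
    then have "a * price_bound z0 0 x - \<gamma> * x = max_profit z0 \<gamma> a"
      using profit_curve_eq_max_profit_iff[OF assms(1,2)] by (simp add: a_def x_def)
    then show ?thesis using \<open>real (card S) = a\<close> by (simp add: profit_def)
  qed
  ultimately show ?thesis by (simp add: a_def)
qed

lemma revenue_bound_less_max_profit:
  assumes "network n g" "z0 > 0" "\<gamma> > 0" "z > 0" "10 * z0 * sqrt \<gamma> \<le> 3"
    and "M \<subseteq> {1..n}" "\<not> independent_set n g M"
  shows "(\<Sum>i\<in>M. price_bound z0 (deg_in n g M i) z) - \<gamma> * z
    < max_profit z0 \<gamma> (real (independence_number n g))"
proof -
  define a where "a = real (independence_number n g)"
  define H where "H = max (price_bound z0 0 z) (2 / (5 * z0))"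
  have scaled_less: "real (k + 1) * price_bound z0 k z < H" if "k \<ge> 1" for k
    using scaled_price_bound_less_max[OF assms(2,4) that] by (simp add: H_def)
  moreover have "real (k + 1) * price_bound z0 k z \<le> H" for k
    using scaled_less[of k] by (cases k) (simp_all add: H_def)
  ultimately obtain S where "independent_set n g S"
    "(\<Sum>i\<in>M. price_bound z0 (deg_in n g M i) z) < H * real (card S)"
    using ex_independent_subset_weight_sum_less[OF assms(1) price_bound_antimono _ _ assms(6,7)]
      assms(2,4) by (metis less_imp_le)
  moreover have "H * real (card S) \<le> H * a"
    using card_le_independence_number[OF \<open>independent_set n g S\<close>] assms(2)
    by (intro mult_left_mono) (simp_all add: a_def H_def le_max_iff_disj)
  moreover have "H * a - \<gamma> * z \<le> max_profit z0 \<gamma> a"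
  proof (cases "price_bound z0 0 z \<le> 2 / (5 * z0)")
    case True
    moreover have "0 \<le> \<gamma> * z" using assms(3,4) by simp
    ultimately show ?thesis
      using max_profit_lower_bound[OF assms(2,3,5), of "independence_number n g"]
      by (simp add: H_def a_def)
  next
    case False
    then show ?thesis
      using profit_curve_le_max_profit[of z0 \<gamma> a z] assms(2-4)
      by (simp add: H_def a_def mult.commute)
  qed
  ultimately show ?thesis by (simp add: a_def)
qed

lemma independent_if_max_profit_le_profit:
  assumes "network n g" "z0 > 0" "\<gamma> > 0" "n \<ge> 2 \<Longrightarrow> 10 * z0 * sqrt \<gamma> \<le> 3"
    and "feasible n g z0 (M, z, p)"
    and "max_profit z0 \<gamma> (real (independence_number n g)) \<le> profit \<gamma> (M, z, p)"
  shows "independent_set n g M"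
proof (rule ccontr)
  assume "\<not> independent_set n g M"
  have "M \<subseteq> {1..n}" "z > 0" using assms(5) by (simp_all add: feasible_def is_contract_def)
  then have "10 * z0 * sqrt \<gamma> \<le> 3"
    using assms(4) two_le_if_not_independent[OF assms(1)] \<open>\<not> independent_set n g M\<close> by blast
  then have "(\<Sum>i\<in>M. price_bound z0 (deg_in n g M i) z) - \<gamma> * z
      < max_profit z0 \<gamma> (real (independence_number n g))"
    using revenue_bound_less_max_profit[OF assms(1-3) \<open>z > 0\<close>] \<open>M \<subseteq> {1..n}\<close>
      \<open>\<not> independent_set n g M\<close> by blast
  then show False
    using feasible_profit_le[OF assms(5), of \<gamma>] assms(6) by linarith
qed

lemma independent_target_attaining_max_profit:
  assumes "z0 > 0" "\<gamma> > 0" "feasible n g z0 (M, z, p)" "independent_set n g M"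
    and "max_profit z0 \<gamma> (real (independence_number n g)) \<le> profit \<gamma> (M, z, p)"
  shows "card M = independence_number n g"
    and "z = sqrt (real (independence_number n g) / \<gamma>) - z0"
    and "\<forall>i\<in>M. p i = price_bound z0 0 z"
proof -
  define a where "a = real (independence_number n g)"
  define P where "P = price_bound z0 0 z"
  have "z > 0" "finite M" and p_le: "\<And>i. i \<in> M \<Longrightarrow> p i \<le> P"
    using assms(3,4) deg_in_isolated[OF assms(4)] finite_subset[of M "{1..n}"]
    unfolding feasible_def is_contract_def P_def by auto
  have "P > 0" using price_bound_pos[OF assms(1) \<open>z > 0\<close>] by (simp add: P_def)
  have "(\<Sum>i\<in>M. p i) \<le> real (card M) * P"
    using p_le by (intro sum_bounded_above) auto
  moreover have "real (card M) * P \<le> a * P"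
    using card_le_independence_number[OF assms(4)] \<open>P > 0\<close> by (simp add: a_def)
  moreover have "a * P - \<gamma> * z \<le> max_profit z0 \<gamma> a"
    using profit_curve_le_max_profit[OF assms(1,2)] assms(1) \<open>z > 0\<close> by (simp add: a_def P_def)
  moreover have "max_profit z0 \<gamma> a \<le> (\<Sum>i\<in>M. p i) - \<gamma> * z"
    using assms(5) by (simp add: a_def profit_def)
  ultimately have sum_eq: "(\<Sum>i\<in>M. p i) = real (card M) * P"
    and card_eq: "real (card M) * P = a * P"
    and curve_eq: "a * P - \<gamma> * z = max_profit z0 \<gamma> a"
    by linarith+
  show "card M = independence_number n g"
    using card_eq \<open>P > 0\<close> by (simp add: a_def)
  show "z = sqrt (real (independence_number n g) / \<gamma>) - z0"
    using curve_eq profit_curve_eq_max_profit_iff[OF assms(1,2)] assms(1) \<open>z > 0\<close>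
    by (simp add: a_def P_def)
  show "\<forall>i\<in>M. p i = price_bound z0 0 z"
  proof (rule ccontr)
    assume "\<not> (\<forall>i\<in>M. p i = price_bound z0 0 z)"
    then have "\<exists>i\<in>M. p i < P" using p_le by (force simp: P_def)
    then have "(\<Sum>i\<in>M. p i) < (\<Sum>i\<in>M. P)"
      using p_le \<open>finite M\<close> by (intro sum_strict_mono_ex1) auto
    then show False using sum_eq by simp
  qed
qed

theorem theorem1:
  fixes n :: nat and g :: "nat \<Rightarrow> nat \<Rightarrow> bool" and z0 \<gamma> :: real
    and M :: "nat set" and z :: real and p :: "nat \<Rightarrow> real"
  assumes "network n g" and "z0 > 0" and "\<gamma> > 0"
    and "z0 < 1 / (2 * sqrt \<gamma>) * ((real n + 1) / (2 * real n + 1))"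
    and "optimal n g z0 \<gamma> (M, z, p)"
  shows "max_independent_set n g M
    \<and> z = sqrt (real (independence_number n g) / \<gamma>) - z0
    \<and> (\<forall>i\<in>M. p i = 1 / z0 - sqrt (\<gamma> / real (independence_number n g)))"
proof -
  define a where "a = real (independence_number n g)"
  have feasible: "feasible n g z0 (M, z, p)" using assms(5) by (simp add: optimal_def)
  then have "M \<subseteq> {1..n}" by (simp add: feasible_def is_contract_def)
  obtain i where "i \<in> M" using optimal_target_nonempty[OF assms(3,5)] by blast
  then have "a \<ge> 1"
    using independence_number_ge_one[OF assms(1)] \<open>M \<subseteq> {1..n}\<close> by (force simp: a_def)
  then have max_le: "max_profit z0 \<gamma> a \<le> profit \<gamma> (M, z, p)"
    using max_profit_le_optimal_profit[OF assms(2,3) _ assms(5)]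
      prior_precision_bounds(1)[OF assms(3,4)] by (simp add: a_def)
  then have "independent_set n g M"
    using independent_if_max_profit_le_profit[OF assms(1-3) prior_precision_bounds(2)[OF assms(3,4)]
        feasible] by (simp add: a_def)
  note optimal_form =
    independent_target_attaining_max_profit[OF assms(2,3) feasible this max_le[unfolded a_def]]
  have "price_bound z0 0 z = 1 / z0 - sqrt (\<gamma> / a)"
    using optimal_form(2) \<open>a \<ge> 1\<close> by (simp add: a_def price_bound_zero real_sqrt_divide)
  then show ?thesis
    using optimal_form \<open>independent_set n g M\<close> by (simp add: max_independent_set_def a_def)
qed

end
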